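(* In the first-method model ($F\subset\mathbb R^d$ satisfying (A1)–(A3), $\beta=(\beta_0,\dots,\beta_d,s)^\top$ with $\beta_k=\log|\mathcal C_k(F)|$, observations $y_{kj}=\beta_k+sx_j+\delta_{kj}$, $k=0,\dots,d$, $x_j=-\log\varepsilon_j$ for strictly decreasing radii $\varepsilon_j>0$), let $X_n\in\mathbb R^{n(d+1)\times(d+2)}$ be the design matrix whose row corresponding to $(j,k)$ is $(e_k^\top, x_j)$ with $e_k\in\mathbb R^{d+1}$ the $k$-th unit vector, and let $\hat\beta^{(n)}=(X_n^\top X_n)^{-1}X_n^\top y^{(n)}$ be the least squares estimator. Assume the error vector is $\delta^{(n)}=\sigma\gamma^{(n)}$ with $\sigma>0$ and $\gamma^{(n)}$ having i.i.d. coordinates (common distribution) of mean $0$ and variance $1$, so $Q_n=\sigma^2I$. Suppose there are constants $\gamma,\mu\ge0$ with $\max\{\mu,2\mu-\gamma\}<1$ such that $\widetilde S_n^2=\Theta(n^\gamma)$ and $x_n=O(n^{\mu/2})$ as $n\to\infty$. Then for each $t\in\mathbb R^{d+2}\setminus\{0\}$, $$\frac{t^\top(\hat\beta^{(n)}-\beta)}{\sigma\sqrt{t^\top(X_n^\top X_n)^{-1}t}}\xrightarrow{d}Z\sim\mathcal N(0,1)\quad(n\to\infty).$$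
   Context: (A1): the curvature measures of the parallel sets $F_\varepsilon$ are well defined for a.e. $\varepsilon>0$; (A2): each total curvature $C_k(F_\varepsilon)$ has constant strict sign in $\varepsilon$; (A3): the fractal curvatures $\mathcal C_k(F)=\operatorname{ess\,lim}_{\varepsilon\searrow0}\varepsilon^{s-k}C_k(F_\varepsilon)$ exist, $s$ the Minkowski dimension. $y^{(n)}$ stacks $y_{01},\dots,y_{d1},\dots,y_{0n},\dots,y_{dn}$. $\bar x_n,\widetilde S_n^2$ are the empirical mean and $1/n$-normalized variance of $x_1,\dots,x_n$. *)

theory Defs
  imports "HOL-Probability.Probability" "HOL-Library.Landau_Symbols"
    "Jordan_Normal_Form.Gauss_Jordan_Elimination"
begin

definition regressor :: "(nat \<Rightarrow> real) \<Rightarrow> nat \<Rightarrow> real" where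
  "regressor eps j = - ln (eps j)"

definition emp_mean :: "(nat \<Rightarrow> real) \<Rightarrow> nat \<Rightarrow> real" where
  "emp_mean x n = (\<Sum>j=1..n. x j) / real n"

definition emp_var :: "(nat \<Rightarrow> real) \<Rightarrow> nat \<Rightarrow> real" where
  "emp_var x n = (\<Sum>j=1..n. (x j - emp_mean x n)^2) / real n"

text \<open>Row r (0-based) of the stacked system corresponds to the pair (j,k) with
  j = r div (d+1) + 1 and k = r mod (d+1), i.e. the ordering
  (k,j) = (0,1),...,(d,1),...,(0,n),...,(d,n).\<close>
definition obs_j :: "nat \<Rightarrow> nat \<Rightarrow> nat" where "obs_j d r = r div (d+1) + 1"
definition obs_k :: "nat \<Rightarrow> nat \<Rightarrow> nat" where "obs_k d r = r mod (d+1)"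

definition design_mat :: "nat \<Rightarrow> (nat \<Rightarrow> real) \<Rightarrow> nat \<Rightarrow> real mat" where
  "design_mat d x n = mat (n*(d+1)) (d+2)
     (\<lambda>(r,c). if c = d+1 then x (obs_j d r) else if c = obs_k d r then 1 else 0)"

definition obs_vec :: "nat \<Rightarrow> real vec \<Rightarrow> (nat \<Rightarrow> real) \<Rightarrow> (nat \<Rightarrow> nat \<Rightarrow> real) \<Rightarrow> nat \<Rightarrow> real vec" where
  "obs_vec d \<beta> x \<delta> n = vec (n*(d+1))
     (\<lambda>r. \<beta> $ (obs_k d r) + \<beta> $ (d+1) * x (obs_j d r) + \<delta> (obs_k d r) (obs_j d r))"

definition gram_inv :: "nat \<Rightarrow> (nat \<Rightarrow> real) \<Rightarrow> nat \<Rightarrow> real mat" where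
  "gram_inv d x n = the (mat_inverse (transpose_mat (design_mat d x n) * design_mat d x n))"

definition lse :: "nat \<Rightarrow> real vec \<Rightarrow> (nat \<Rightarrow> real) \<Rightarrow> (nat \<Rightarrow> nat \<Rightarrow> real) \<Rightarrow> nat \<Rightarrow> real vec" where
  "lse d \<beta> x \<delta> n = gram_inv d x n *\<^sub>v (transpose_mat (design_mat d x n) *\<^sub>v obs_vec d \<beta> x \<delta> n)"

end

theory Submission
  imports Defs "Jordan_Normal_Form.Determinant"
begin

text \<open>
  The standardised contrast is exactly linear in the errors: it equals
  sum_r c_nr gamma_r with c_n = w/|w| and w = X (X^T X)^-1 t, so sum_r c_nr^2 = 1.
  For such triangular arrays of i.i.d. variables the central limit theorem holds as soon
  as max_r |c_nr| -> 0, which is checked on characteristic functions.  A component of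
  w = X v has the form v_k + s x_j; splitting sum_j (v_k + s x_j)^2 into a mean and a
  variance part bounds its square by (2/n + 2 (x_n - x_1)^2 / (n S_n^2)) |w|^2, and under
  the growth assumptions this factor is O(1/n + n^(mu - 1 - gamma)).  Hence only
  mu < 1 + gamma is actually needed.
\<close>

unbundle no vec_syntax
no_notation inner (infix \<open>\<bullet>\<close> 70)

section \<open>A central limit theorem for weighted sums of i.i.d. variables\<close>

lemma exp_neg_approx:
  assumes "0 \<le> (a::real)" shows "\<bar>1 - a - exp (-a)\<bar> \<le> a^2/2"
proof -
  let ?f = "\<lambda>x::real. 1 - x + x^2/2 - exp (-x)"
  have "?f 0 \<le> ?f a"
  proof (rule DERIV_nonneg_imp_nondecreasing[OF assms])
    fix x :: real assume "0 \<le> x" "x \<le> a"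
    show "\<exists>y. DERIV ?f x :> y \<and> y \<ge> 0"
    proof (intro exI conjI)
      show "DERIV ?f x :> (- 1 + x + exp (-x))"
        by (auto intro!: derivative_eq_intros)
      show "0 \<le> - 1 + x + exp (-x)" using exp_ge_add_one_self[of "-x"] by simp
    qed
  qed
  then show ?thesis using exp_ge_add_one_self[of "-a"] assms by (simp add: abs_le_iff)
qed

lemma (in real_distribution) char_approx_quadratic:
  assumes int1: "integrable M (\<lambda>x. x)" and int2: "integrable M (\<lambda>x. x^2)"
    and mean0: "expectation (\<lambda>x. x) = 0" and var1: "expectation (\<lambda>x. x^2) = 1"
    and "\<eta> > 0"
  obtains \<delta> where "\<delta> > 0" "\<And>v. \<bar>v\<bar> \<le> \<delta> \<Longrightarrow> cmod (char M v - (1 - v^2/2)) \<le> \<eta> * v^2"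
proof -
  define h where "h \<delta> = expectation (\<lambda>x. min (6 * x\<^sup>2) (\<delta> * \<bar>x\<bar> ^ 3))" for \<delta> :: real
  have h_int: "integrable M (\<lambda>x. min (6 * x\<^sup>2) (\<delta> * \<bar>x\<bar> ^ 3))" if "\<delta> \<ge> 0" for \<delta>
    by (rule Bochner_Integration.integrable_bound[where f="\<lambda>x. 6 * x^2"]) (use int2 that in auto)
  have h_mono: "h \<delta>' \<le> h \<delta>" if "0 \<le> \<delta>'" "\<delta>' \<le> \<delta>" for \<delta> \<delta>'
    unfolding h_def using that
    by (intro integral_mono h_int) (auto intro!: min.coboundedI2 mult_right_mono)
  have "\<And>x. (\<lambda>m. min (6 * x\<^sup>2) ((1 / real (Suc m)) * \<bar>x\<bar> ^ 3)) \<longlonglongrightarrow> min (6 * x\<^sup>2) 0"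
    by (intro tendsto_intros tendsto_mult_left_zero lim_1_over_n[THEN LIMSEQ_Suc])
  then have "(\<lambda>m. h (1 / real (Suc m))) \<longlonglongrightarrow> expectation (\<lambda>x. min (6 * x\<^sup>2) 0)"
    unfolding h_def
    by (intro integral_dominated_convergence [where w = "\<lambda>x. 6 * x^2"]) (use int2 in auto)
  then have "(\<lambda>m. h (1 / real (Suc m))) \<longlonglongrightarrow> 0"
    by (simp add: min_absorb2)
  from LIMSEQ_D[OF this, of "6 * \<eta>"] \<open>\<eta> > 0\<close>
  obtain m where "norm (h (1 / real (Suc m))) < 6 * \<eta>" by auto
  then have m: "h (1 / real (Suc m)) \<le> 6 * \<eta>" by simp
  show ?thesis
  proof (rule that)
    show "1 / real (Suc m) > 0" by simp
    fix v :: real assume v: "\<bar>v\<bar> \<le> 1 / real (Suc m)"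
    have "variance (\<lambda>x. x) = 1" using mean0 var1 by simp
    then have "cmod (char M v - (1 - v^2/2)) \<le> v^2 / 6 * h \<bar>v\<bar>"
      using char_approx3[OF int1 mean0 int2] by (simp add: h_def)
    also have "\<dots> \<le> v^2 / 6 * (6 * \<eta>)"
      using h_mono[OF _ v] m by (intro mult_left_mono) auto
    finally show "cmod (char M v - (1 - v^2/2)) \<le> \<eta> * v^2" by (simp add: mult.commute)
  qed
qed

lemma (in real_distribution) char_approx_gaussian:
  assumes "\<bar>v\<bar> \<le> \<delta>" and "\<And>v. \<bar>v\<bar> \<le> \<delta> \<Longrightarrow> cmod (char M v - (1 - v^2/2)) \<le> \<eta> * v^2"
  shows "cmod (char M v - exp (- (v^2/2))) \<le> v^2 * (\<eta> + v^2/8)"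
proof -
  have "cmod (complex_of_real (1 - v^2/2) - exp (- (v^2/2))) \<le> (v^2/2)^2/2"
    using exp_neg_approx[of "v^2/2"] by (simp del: of_real_diff add: of_real_diff[symmetric])
  then have "cmod (char M v - exp (- (v^2/2)))
      \<le> cmod (char M v - (1 - v^2/2)) + (v^2/2)^2/2"
    using norm_triangle_ineq[of "char M v - (1 - v^2/2)" "(1 - v^2/2) - exp (- (v^2/2))"]
    by simp
  also have "\<dots> \<le> \<eta> * v^2 + (v^2/2)^2/2" using assms by simp
  finally show ?thesis by (simp add: power2_eq_square field_simps)
qed

lemma (in real_distribution) char_scaled_approx:
  assumes approx: "\<And>v. \<bar>v\<bar> \<le> \<delta> \<Longrightarrow> cmod (char M v - (1 - v^2/2)) \<le> \<eta>' * v^2"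
    and "\<bar>c * u\<bar> \<le> \<delta>" and "u^2 * \<eta>' \<le> \<eta> / 4" and "c^2 * u^4 \<le> \<eta>" and "\<eta> \<ge> 0"
  shows "cmod (char M (c * u) - exp (- ((c * u)^2 / 2))) \<le> c^2 * (\<eta> / 2)"
proof -
  have "cmod (char M (c * u) - exp (- ((c * u)^2 / 2))) \<le> (c * u)^2 * (\<eta>' + (c * u)^2 / 8)"
    using assms(2) by (rule char_approx_gaussian) (rule approx)
  also have "\<dots> = c^2 * (u^2 * \<eta>' + c^2 * u^4 / 8)"
    by (simp add: power_mult_distrib field_simps)
  also have "\<dots> \<le> c^2 * (\<eta> / 2)"
    by (rule mult_left_mono) (use assms(3-5) in linarith, simp)
  finally show ?thesis .
qed

lemma (in real_distribution) prod_char_tendsto_gaussian: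
  fixes c :: "nat \<Rightarrow> nat \<Rightarrow> real" and N :: "nat \<Rightarrow> nat"
  assumes int1: "integrable M (\<lambda>x. x)" and int2: "integrable M (\<lambda>x. x^2)"
    and mean0: "expectation (\<lambda>x. x) = 0" and var1: "expectation (\<lambda>x. x^2) = 1"
    and sumsq: "eventually (\<lambda>n. (\<Sum>i<N n. (c n i)^2) = 1) sequentially"
    and small: "\<And>e. e > 0 \<Longrightarrow> eventually (\<lambda>n. \<forall>i<N n. \<bar>c n i\<bar> \<le> e) sequentially"
  shows "(\<lambda>n. \<Prod>i<N n. char M (c n i * u)) \<longlonglongrightarrow> exp (- (u^2/2))"
proof (rule tendstoI)
  fix \<eta> :: real assume \<eta>: "\<eta> > 0"
  \<comment> \<open>\<open>K\<close> makes the two error terms in \<open>char_scaled_approx\<close> at most \<open>\<eta>/4\<close> and \<open>\<eta>/8\<close>\<close>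
  define K where "K = 4 * (u^2 + u^4 + 1)"
  have K: "K > 0" "4 * u^2 \<le> K" "u^4 \<le> K"
    unfolding K_def by (smt (verit) zero_le_power2 zero_le_even_power even_numeral)+
  have "u^2 * (\<eta> / K) \<le> K / 4 * (\<eta> / K)"
    using K \<eta> by (intro mult_right_mono) simp_all
  then have u2: "u^2 * (\<eta> / K) \<le> \<eta> / 4" using K(1) by simp
  obtain \<delta> where \<delta>: "\<delta> > 0"
    and char_\<delta>: "\<And>v. \<bar>v\<bar> \<le> \<delta> \<Longrightarrow> cmod (char M v - (1 - v^2/2)) \<le> \<eta> / K * v^2"
    using char_approx_quadratic[OF int1 int2 mean0 var1, of "\<eta> / K"] \<eta> K by auto
  define \<epsilon> where "\<epsilon> = min 1 (min (\<delta> / (\<bar>u\<bar> + 1)) (\<eta> / K))"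
  have \<epsilon>: "\<epsilon> > 0" "\<epsilon> \<le> 1" "\<epsilon> \<le> \<eta> / K" "\<epsilon> * \<bar>u\<bar> \<le> \<delta>"
  proof -
    have "\<epsilon> * \<bar>u\<bar> \<le> \<delta> / (\<bar>u\<bar> + 1) * (\<bar>u\<bar> + 1)"
      unfolding \<epsilon>_def using \<delta> by (intro mult_mono) auto
    then show "\<epsilon> * \<bar>u\<bar> \<le> \<delta>" by simp
  qed (use \<delta> \<eta> K in \<open>auto simp: \<epsilon>_def\<close>)
  show "\<forall>\<^sub>F n in sequentially. dist (\<Prod>i<N n. char M (c n i * u)) (exp (- (u^2/2))) < \<eta>"
    using sumsq small[OF \<epsilon>(1)]
  proof eventually_elim
    case (elim n)
    let ?w = "\<lambda>i. complex_of_real (exp (- ((c n i * u)^2 / 2)))"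
    have "exp (- (u^2/2)) = exp (\<Sum>i<N n. - ((c n i * u)^2 / 2))"
      using elim(1) by (simp add: sum_negf power_mult_distrib sum_divide_distrib[symmetric]
           sum_distrib_right[symmetric])
    then have exp_eq: "complex_of_real (exp (- (u^2/2))) = (\<Prod>i<N n. ?w i)"
      by (simp add: exp_sum)
    have term_le: "cmod (char M (c n i * u) - ?w i) \<le> (c n i)^2 * (\<eta> / 2)" if "i < N n" for i
    proof (rule char_scaled_approx[OF char_\<delta> _ u2 _ less_imp_le[OF \<eta>]])
      have ci: "\<bar>c n i\<bar> \<le> \<epsilon>" using elim(2) that by auto
      then show "\<bar>c n i * u\<bar> \<le> \<delta>"
        using mult_right_mono[OF ci, of "\<bar>u\<bar>"] \<epsilon>(4) by (simp add: abs_mult)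
      have "(c n i)^2 \<le> \<epsilon>^2"
        using power_mono[OF ci abs_ge_zero, of 2] by simp
      also have "\<dots> \<le> \<eta> / K"
        using \<epsilon> by (simp add: power2_eq_square mult_le_one order_trans[OF mult_left_le])
      finally have "(c n i)^2 * u^4 \<le> \<eta> / K * K"
        using K \<eta> by (intro mult_mono) simp_all
      then show "(c n i)^2 * u^4 \<le> \<eta>" using K(1) by simp
    qed
    have "dist (\<Prod>i<N n. char M (c n i * u)) (exp (- (u^2/2)))
        = cmod ((\<Prod>i<N n. char M (c n i * u)) - (\<Prod>i<N n. ?w i))"
      by (simp add: exp_eq dist_norm)
    also have "\<dots> \<le> (\<Sum>i<N n. cmod (char M (c n i * u) - ?w i))"
      by (rule norm_prod_diff) (auto simp: cmod_char_le_1)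
    also have "\<dots> \<le> (\<Sum>i<N n. (c n i)^2 * (\<eta> / 2))"
      by (intro sum_mono term_le) simp
    also have "\<dots> = \<eta> / 2"
      unfolding sum_distrib_right[symmetric] elim(1) by simp
    finally show ?case using \<eta> by simp
  qed
qed

lemma (in prob_space) weighted_clt:
  fixes X :: "nat \<Rightarrow> 'a \<Rightarrow> real" and c :: "nat \<Rightarrow> nat \<Rightarrow> real" and N :: "nat \<Rightarrow> nat"
  assumes indep: "indep_vars (\<lambda>i. borel) X UNIV"
    and ident: "\<And>i. distr M borel (X i) = distr M borel (X 0)"
    and int2: "integrable M (\<lambda>\<omega>. (X 0 \<omega>)^2)"
    and mean0: "expectation (X 0) = 0" and var1: "variance (X 0) = 1"
    and sumsq: "eventually (\<lambda>n. (\<Sum>i<N n. (c n i)^2) = 1) sequentially"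
    and small: "\<And>e. e > 0 \<Longrightarrow> eventually (\<lambda>n. \<forall>i<N n. \<bar>c n i\<bar> \<le> e) sequentially"
  shows "weak_conv_m (\<lambda>n. distr M borel (\<lambda>\<omega>. \<Sum>i<N n. c n i * X i \<omega>)) std_normal_distribution"
proof (rule levy_continuity)
  have X_rv [measurable]: "random_variable borel (X i)" for i
    using indep unfolding indep_vars_def2 by simp
  define \<mu> where "\<mu> = distr M borel (X 0)"
  have X_distr: "distr M borel (X i) = \<mu>" for i
    unfolding \<mu>_def by (rule ident)
  interpret \<mu>: real_distribution \<mu>
    unfolding \<mu>_def by (rule real_distribution_distr) simp
  have int1: "integrable M (X 0)"
    by (rule square_integrable_imp_integrable[OF X_rv int2])
  have moments: "integrable \<mu> (\<lambda>x. x)" "integrable \<mu> (\<lambda>x. x^2)"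
      "\<mu>.expectation (\<lambda>x. x) = 0" "\<mu>.expectation (\<lambda>x. x^2) = 1"
    unfolding \<mu>_def using int1 int2 mean0 var1
    by (subst integrable_distr_eq integral_distr; simp)+
  show "real_distribution (distr M borel (\<lambda>\<omega>. \<Sum>i<N n. c n i * X i \<omega>))" for n
    by (rule real_distribution_distr) simp
  show "real_distribution std_normal_distribution" by (rule real_dist_normal_dist)
  fix u :: real
  have char_scaled: "char (distr M borel (\<lambda>\<omega>. a * X i \<omega>)) u = char \<mu> (a * u)" for a i
    unfolding char_def by (subst X_distr [symmetric, of i]) (auto simp: integral_distr ac_simps)
  have "char (distr M borel (\<lambda>\<omega>. \<Sum>i<N n. c n i * X i \<omega>)) u =
      (\<Prod>i<N n. char (distr M borel (\<lambda>\<omega>. c n i * X i \<omega>)) u)" for n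
    by (rule char_distr_sum, rule indep_vars_compose2[where X=X], rule indep_vars_subset[OF indep]) auto
  then show "(\<lambda>n. char (distr M borel (\<lambda>\<omega>. \<Sum>i<N n. c n i * X i \<omega>)) u)
      \<longlonglongrightarrow> char std_normal_distribution u"
    using \<mu>.prod_char_tendsto_gaussian[OF moments sumsq small]
    by (simp add: char_scaled char_std_normal_distribution)
qed

lemma weak_conv_m_eventually_cong:
  assumes "weak_conv_m F \<mu>" and "eventually (\<lambda>n. F n = G n) sequentially"
  shows "weak_conv_m G \<mu>"
  unfolding weak_conv_m_def weak_conv_def
proof (intro allI impI)
  fix z assume "isCont (cdf \<mu>) z"
  with assms(1) have "(\<lambda>n. cdf (F n) z) \<longlonglongrightarrow> cdf \<mu> z"
    unfolding weak_conv_m_def weak_conv_def by blast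
  moreover have "eventually (\<lambda>n. cdf (F n) z = cdf (G n) z) sequentially"
    using assms(2) by (rule eventually_mono) simp
  ultimately show "(\<lambda>n. cdf (G n) z) \<longlonglongrightarrow> cdf \<mu> z"
    by (rule Lim_transform_eventually)
qed

section \<open>The design matrix and the least squares estimator\<close>

lemma block_divmod: "k < (m::nat) \<Longrightarrow> (j*m+k) div m = j \<and> (j*m+k) mod m = k"
  by (cases "m = 0") (simp_all add: div_mult_self3 mod_mult_self3)

lemma block_index_less: "k < d+1 \<Longrightarrow> j < n \<Longrightarrow> j*(d+1)+k < n*(d+(1::nat))"
proof -
  assume that: "k < d+1" "j < n"
  then have "j*(d+1)+k < Suc j * (d+1)" by simp
  also have "\<dots> \<le> n*(d+1)" using that by (intro mult_right_mono) auto
  finally show ?thesis .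
qed

lemma obs_jk_block:
  assumes "k < d+1" shows "obs_j d (j*(d+1)+k) = j+1" "obs_k d (j*(d+1)+k) = k"
  using block_divmod[OF assms, of j] unfolding obs_j_def obs_k_def by simp_all

lemma obs_k_le: "obs_k d r \<le> d"
  unfolding obs_k_def using less_Suc_eq_le by fastforce

lemma obs_j_ge: "obs_j d r \<ge> 1"
  unfolding obs_j_def by simp

lemma obs_j_le: "r < n*(d+1) \<Longrightarrow> obs_j d r \<le> n"
  unfolding obs_j_def by (simp add: less_mult_imp_div_less Suc_leI)

lemma inj_obs_index: "inj (\<lambda>r. (obs_k d r, obs_j d r))"
proof (rule injI)
  fix r r' assume "(obs_k d r, obs_j d r) = (obs_k d r', obs_j d r')"
  then have "r mod (d+1) = r' mod (d+1)" "r div (d+1) = r' div (d+1)"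
    unfolding obs_k_def obs_j_def by simp_all
  then show "r = r'" by (metis div_mult_mod_eq)
qed

lemma design_mat_carrier: "design_mat d x n \<in> carrier_mat (n*(d+1)) (d+2)"
  unfolding design_mat_def by simp

lemma design_mat_mult_vec_index:
  assumes r: "r < n*(d+1)" and v: "v \<in> carrier_vec (d+2)"
  shows "(design_mat d x n *\<^sub>v v) $ r = v $ (obs_k d r) + x (obs_j d r) * v $ (d+1)"
proof -
  let ?e = "\<lambda>i. if i = d+1 then x (obs_j d r) else if i = obs_k d r then 1 else 0"
  have k: "obs_k d r < d+1" using obs_k_le[of d r] by simp
  have "(design_mat d x n *\<^sub>v v) $ r = row (design_mat d x n) r \<bullet> v"
    using r unfolding design_mat_def by (intro index_mult_mat_vec) simp
  also have "row (design_mat d x n) r = vec (d+2) ?e"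
    using r unfolding design_mat_def by (subst row_mat) auto
  finally have "(design_mat d x n *\<^sub>v v) $ r = (\<Sum>i<d+1. ?e i * v $ i) + x (obs_j d r) * v $ (d+1)"
    using v unfolding scalar_prod_def by (simp add: lessThan_atLeast0)
  also have "(\<Sum>i<d+1. ?e i * v $ i) = (\<Sum>i<d+1. if i = obs_k d r then v $ i else 0)"
    by (rule sum.cong) auto
  finally show ?thesis using k by (simp add: sum.delta)
qed

lemma design_mat_mult_vec_block:
  assumes "k < d+1" "j < n" "v \<in> carrier_vec (d+2)"
  shows "(design_mat d x n *\<^sub>v v) $ (j*(d+1)+k) = v $ k + x (j+1) * v $ (d+1)"
  using design_mat_mult_vec_index[OF block_index_less[OF assms(1,2)] assms(3), of x]
    obs_jk_block[OF assms(1), of j]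
  by simp

lemma design_mat_mult_vec_eq_0:
  fixes x :: "nat \<Rightarrow> real"
  assumes n: "n \<ge> 2" and x12: "x 1 \<noteq> x 2" and z: "z \<in> carrier_vec (d+2)"
    and zero: "\<And>r. r < n*(d+1) \<Longrightarrow> (design_mat d x n *\<^sub>v z) $ r = 0"
  shows "z = 0\<^sub>v (d+2)"
proof -
  have e: "z $ k + x (j+1) * z $ (d+1) = 0" if "k < d+1" "j < n" for k j
    using zero[OF block_index_less[OF that]] design_mat_mult_vec_block[OF that z, of x] by simp
  have "z $ 0 + x 1 * z $ (d+1) = 0" "z $ 0 + x 2 * z $ (d+1) = 0"
    using e[of 0 0] e[of 0 1] n by (simp_all add: numeral_2_eq_2)
  then have "(x 1 - x 2) * z $ (d+1) = 0" unfolding left_diff_distrib by linarith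
  then have s: "z $ (d+1) = 0" using x12 by simp
  have "z $ i = 0" if "i < d+2" for i
    using that e[of i 0] s n by (cases "i = d+1") auto
  then show ?thesis using z by (intro eq_vecI) auto
qed

lemma scalar_prod_self_eq_sum_sq: "(w::real vec) \<bullet> w = (\<Sum>r<dim_vec w. (w $ r)^2)"
  unfolding scalar_prod_def by (simp add: lessThan_atLeast0 power2_eq_square)

lemma scalar_prod_self_eq_0_imp_index:
  assumes "(w::real vec) \<bullet> w = 0" "r < dim_vec w" shows "w $ r = 0"
proof -
  have "\<forall>r\<in>{..<dim_vec w}. (w $ r)^2 = 0"
    using assms(1) by (subst (asm) scalar_prod_self_eq_sum_sq, subst (asm) sum_nonneg_eq_0_iff) auto
  then show ?thesis using assms(2) by simp
qed

lemma transpose_mult_self_scalar: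
  fixes X :: "'a :: comm_ring_1 mat"
  assumes "X \<in> carrier_mat m k" "v \<in> carrier_vec k"
  shows "(X *\<^sub>v v) \<bullet> (X *\<^sub>v v) = ((transpose_mat X * X) *\<^sub>v v) \<bullet> v"
  using transpose_vec_mult_scalar[OF assms mult_mat_vec_carrier[OF assms]] assms
  by (simp add: assoc_mult_mat_vec)

lemma gram_inv_inverse:
  fixes d n :: nat and x :: "nat \<Rightarrow> real"
  assumes n: "n \<ge> 2" and x12: "x 1 \<noteq> x 2"
  defines "A \<equiv> transpose_mat (design_mat d x n) * design_mat d x n"
  shows "gram_inv d x n \<in> carrier_mat (d+2) (d+2)"
    and "gram_inv d x n * A = 1\<^sub>m (d+2)" and "A * gram_inv d x n = 1\<^sub>m (d+2)"
proof -
  note X = design_mat_carrier[of d x n]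
  have A: "A \<in> carrier_mat (d+2) (d+2)" unfolding A_def using X by auto
  have "Determinant.det A \<noteq> 0"
  proof
    assume "Determinant.det A = 0"
    then obtain z where z: "z \<in> carrier_vec (d+2)" "z \<noteq> 0\<^sub>v (d+2)" "A *\<^sub>v z = 0\<^sub>v (d+2)"
      using det_0_iff_vec_prod_zero[OF A] by blast
    then have "(design_mat d x n *\<^sub>v z) \<bullet> (design_mat d x n *\<^sub>v z) = 0"
      using transpose_mult_self_scalar[OF X z(1)] unfolding A_def by simp
    then have "z = 0\<^sub>v (d+2)"
      using design_mat_mult_vec_eq_0[OF n x12 z(1)] scalar_prod_self_eq_0_imp_index X by auto
    with z(2) show False ..
  qed
  then obtain B where B: "mat_inverse A = Some B"
    using det_non_zero_imp_unit[OF A, where b="()"] mat_inverse(1)[OF A, where b="()"] by fastforce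
  moreover have "gram_inv d x n = B" unfolding gram_inv_def using B unfolding A_def by simp
  ultimately show "gram_inv d x n \<in> carrier_mat (d+2) (d+2)"
    "gram_inv d x n * A = 1\<^sub>m (d+2)" "A * gram_inv d x n = 1\<^sub>m (d+2)"
    using mat_inverse(2)[OF A B] by auto
qed

text \<open>The entries of \<open>w = X (X^T X)^-1 t\<close> are the weights of the errors in the contrast
  \<open>t^T (lse - \<beta>)\<close>.\<close>

definition lse_weights :: "nat \<Rightarrow> (nat \<Rightarrow> real) \<Rightarrow> real vec \<Rightarrow> nat \<Rightarrow> real vec" where
  "lse_weights d x t n = design_mat d x n *\<^sub>v (transpose_mat (gram_inv d x n) *\<^sub>v t)"

context
  fixes d n :: nat and x :: "nat \<Rightarrow> real" and t :: "real vec"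
  assumes n: "n \<ge> 2" and x12: "x 1 \<noteq> x 2" and t: "t \<in> carrier_vec (d+2)"
begin

private lemma gram_inv_carrier: "gram_inv d x n \<in> carrier_mat (d+2) (d+2)"
  using gram_inv_inverse(1)[OF n x12] .

private lemma gram_inv_transpose_mult_carrier:
  "transpose_mat (gram_inv d x n) *\<^sub>v t \<in> carrier_vec (d+2)"
  using gram_inv_carrier t by simp

private lemma gram_mult_gram_inv_transpose:
  "(transpose_mat (design_mat d x n) * design_mat d x n) *\<^sub>v (transpose_mat (gram_inv d x n) *\<^sub>v t) = t"
proof -
  let ?A = "transpose_mat (design_mat d x n) * design_mat d x n"
  have A: "?A \<in> carrier_mat (d+2) (d+2)" using design_mat_carrier[of d x n] by auto
  have "transpose_mat ?A = ?A"
    using design_mat_carrier[of d x n] by (simp add: transpose_mult)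
  then have "?A * transpose_mat (gram_inv d x n) = transpose_mat (gram_inv d x n * ?A)"
    using transpose_mult[OF gram_inv_carrier A] by simp
  also have "\<dots> = 1\<^sub>m (d+2)" using gram_inv_inverse(2)[OF n x12] by simp
  finally show ?thesis using A gram_inv_carrier t by (simp flip: assoc_mult_mat_vec)
qed

lemma lse_weights_carrier: "lse_weights d x t n \<in> carrier_vec (n*(d+1))"
  unfolding lse_weights_def using design_mat_carrier[of d x n] gram_inv_transpose_mult_carrier by auto

lemma gram_inv_quadratic_form: "t \<bullet> (gram_inv d x n *\<^sub>v t) = lse_weights d x t n \<bullet> lse_weights d x t n"
proof -
  let ?v = "transpose_mat (gram_inv d x n) *\<^sub>v t"
  have "lse_weights d x t n \<bullet> lse_weights d x t n
      = ((transpose_mat (design_mat d x n) * design_mat d x n) *\<^sub>v ?v) \<bullet> ?v"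
    unfolding lse_weights_def
    by (rule transpose_mult_self_scalar[OF design_mat_carrier gram_inv_transpose_mult_carrier])
  also have "\<dots> = ?v \<bullet> t"
    unfolding gram_mult_gram_inv_transpose by (rule comm_scalar_prod[OF t gram_inv_transpose_mult_carrier])
  also have "\<dots> = t \<bullet> (gram_inv d x n *\<^sub>v t)"
    by (rule transpose_vec_mult_scalar[OF gram_inv_carrier t t])
  finally show ?thesis ..
qed

lemma lse_weights_pos:
  assumes "t \<noteq> 0\<^sub>v (d+2)"
  shows "lse_weights d x t n \<bullet> lse_weights d x t n > 0"
proof -
  let ?v = "transpose_mat (gram_inv d x n) *\<^sub>v t"
  have "lse_weights d x t n \<bullet> lse_weights d x t n \<ge> 0"
    unfolding scalar_prod_self_eq_sum_sq by (intro sum_nonneg) auto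
  moreover have "lse_weights d x t n \<bullet> lse_weights d x t n \<noteq> 0"
  proof
    assume "lse_weights d x t n \<bullet> lse_weights d x t n = 0"
    then have "(design_mat d x n *\<^sub>v ?v) $ r = 0" if "r < n*(d+1)" for r
      using scalar_prod_self_eq_0_imp_index[of "lse_weights d x t n" r] lse_weights_carrier that
        design_mat_carrier[of d x n]
      unfolding lse_weights_def by (simp del: index_mult_mat_vec)
    then have "?v = 0\<^sub>v (d+2)"
      by (rule design_mat_mult_vec_eq_0[OF n x12 gram_inv_transpose_mult_carrier])
    then have "t = (transpose_mat (design_mat d x n) * design_mat d x n) *\<^sub>v 0\<^sub>v (d+2)"
      using gram_mult_gram_inv_transpose by metis
    also have "\<dots> = 0\<^sub>v (d+2)"
      using design_mat_carrier[of d x n] by (intro eq_vecI) (auto simp: scalar_prod_def)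
    finally show False using assms by contradiction
  qed
  ultimately show ?thesis by simp
qed

lemma lse_contrast_eq:
  fixes gg :: "nat \<Rightarrow> nat \<Rightarrow> real"
  assumes \<beta>: "\<beta> \<in> carrier_vec (d+2)"
  shows "t \<bullet> (lse d \<beta> x (\<lambda>k j. \<sigma> * gg k j) n - \<beta>)
    = \<sigma> * (\<Sum>r<n*(d+1). lse_weights d x t n $ r * gg (obs_k d r) (obs_j d r))"
proof -
  define X G where "X = design_mat d x n" and "G = gram_inv d x n"
  define e where "e = vec (n*(d+1)) (\<lambda>r. gg (obs_k d r) (obs_j d r))"
  have e: "e \<in> carrier_vec (n*(d+1))" unfolding e_def by simp
  have X: "X \<in> carrier_mat (n*(d+1)) (d+2)" unfolding X_def by (rule design_mat_carrier)
  have XT: "transpose_mat X \<in> carrier_mat (d+2) (n*(d+1))" using X by simp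
  have G: "G \<in> carrier_mat (d+2) (d+2)" unfolding G_def by (rule gram_inv_carrier)
  have v: "transpose_mat G *\<^sub>v t \<in> carrier_vec (d+2)" using G t by simp
  have "obs_vec d \<beta> x (\<lambda>k j. \<sigma> * gg k j) n = X *\<^sub>v \<beta> + \<sigma> \<cdot>\<^sub>v e"
    using X design_mat_mult_vec_index[OF _ \<beta>, of _ n x] unfolding obs_vec_def e_def X_def
    by (intro eq_vecI) (auto simp: mult.commute)
  then have "lse d \<beta> x (\<lambda>k j. \<sigma> * gg k j) n = G *\<^sub>v ((transpose_mat X * X) *\<^sub>v \<beta>)
      + \<sigma> \<cdot>\<^sub>v (G *\<^sub>v (transpose_mat X *\<^sub>v e))"
    unfolding lse_def X_def[symmetric] G_def[symmetric] using X XT G \<beta> e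
    by (simp add: mult_add_distrib_mat_vec[OF XT] mult_add_distrib_mat_vec[OF G]
        mult_mat_vec[OF XT] mult_mat_vec[OF G] assoc_mult_mat_vec)
  also have "G *\<^sub>v ((transpose_mat X * X) *\<^sub>v \<beta>) = (G * (transpose_mat X * X)) *\<^sub>v \<beta>"
    using X by (intro assoc_mult_mat_vec[symmetric, OF G _ \<beta>]) simp
  also have "\<dots> = \<beta>"
    using gram_inv_inverse(2)[OF n x12] \<beta> unfolding X_def G_def by simp
  finally have "lse d \<beta> x (\<lambda>k j. \<sigma> * gg k j) n - \<beta> = \<sigma> \<cdot>\<^sub>v (G *\<^sub>v (transpose_mat X *\<^sub>v e))"
    using G XT e \<beta> by (intro eq_vecI) auto
  then have "t \<bullet> (lse d \<beta> x (\<lambda>k j. \<sigma> * gg k j) n - \<beta>) = \<sigma> * (t \<bullet> (G *\<^sub>v (transpose_mat X *\<^sub>v e)))"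
    using t G XT e by simp
  also have "t \<bullet> (G *\<^sub>v (transpose_mat X *\<^sub>v e)) = (transpose_mat X *\<^sub>v e) \<bullet> (transpose_mat G *\<^sub>v t)"
    using transpose_vec_mult_scalar[OF G _ t, of "transpose_mat X *\<^sub>v e"] XT e v
      comm_scalar_prod[of "transpose_mat X *\<^sub>v e" "d+2"] by simp
  also have "\<dots> = e \<bullet> lse_weights d x t n"
    unfolding lse_weights_def X_def[symmetric] G_def[symmetric] using transpose_vec_mult_scalar[OF X v e] .
  also have "\<dots> = (\<Sum>r<n*(d+1). lse_weights d x t n $ r * gg (obs_k d r) (obs_j d r))"
    unfolding scalar_prod_def e_def using lse_weights_carrier by (simp add: lessThan_atLeast0 mult.commute)
  finally show ?thesis .
qed

end

section \<open>Leverage of a single observation\<close>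

definition leverage_bound :: "(nat \<Rightarrow> real) \<Rightarrow> nat \<Rightarrow> real" where
  "leverage_bound x n = 2 / n + 2 * (x n - x 1)^2 / (n * emp_var x n)"

lemma sum_affine_sq_eq_mean_var:
  fixes x :: "nat \<Rightarrow> real"
  assumes "n \<ge> 1"
  shows "(\<Sum>j=1..n. (a + x j * s)^2) = n * (a + s * emp_mean x n)^2 + s^2 * (n * emp_var x n)"
proof -
  define m where "m = emp_mean x n"
  have nz: "real n \<noteq> 0" using assms by simp
  have mean: "(\<Sum>j=1..n. x j - m) = 0"
    using nz by (simp add: sum_subtractf m_def emp_mean_def)
  have var: "(\<Sum>j=1..n. (x j - m)^2) = n * emp_var x n"
    using nz by (simp add: emp_var_def m_def)
  have "(\<Sum>j=1..n. (a + x j * s)^2)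
      = (\<Sum>j=1..n. (a + s * m)^2 + 2 * (a + s * m) * s * (x j - m) + s^2 * (x j - m)^2)"
    by (rule sum.cong) (auto simp: power2_eq_square algebra_simps)
  also have "\<dots> = n * (a + s * m)^2 + 2 * (a + s * m) * s * (\<Sum>j=1..n. x j - m)
      + s^2 * (\<Sum>j=1..n. (x j - m)^2)"
    by (simp add: sum.distrib sum_distrib_left)
  finally show ?thesis unfolding mean var by (simp add: m_def)
qed

lemma emp_mean_bounds:
  fixes x :: "nat \<Rightarrow> real"
  assumes "n \<ge> 1" and mono: "\<And>i j. 1 \<le> i \<Longrightarrow> i \<le> j \<Longrightarrow> x i \<le> x j"
  shows "x 1 \<le> emp_mean x n" "emp_mean x n \<le> x n"
proof -
  have n: "real n > 0" using assms(1) by simp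
  have "(\<Sum>j=1..n. x 1) \<le> (\<Sum>j=1..n. x j)" "(\<Sum>j=1..n. x j) \<le> (\<Sum>j=1..n. x n)"
    by (intro sum_mono; auto intro: mono)+
  then show "x 1 \<le> emp_mean x n" "emp_mean x n \<le> x n"
    using n by (simp_all add: emp_mean_def field_simps)
qed

lemma design_block_sum_sq_le:
  assumes k: "k < d+1" and v: "v \<in> carrier_vec (d+2)"
  shows "(\<Sum>j=1..n. (v $ k + x j * v $ (d+1))^2) \<le> (\<Sum>r<n*(d+1). ((design_mat d x n *\<^sub>v v) $ r)^2)"
proof -
  let ?W = "\<lambda>r. ((design_mat d x n *\<^sub>v v) $ r)^2"
  have inj: "inj_on (\<lambda>j. j*(d+1)+k) {..<n}"
    by (rule inj_onI) (metis block_divmod[OF k])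
  have "(\<Sum>j=1..n. (v $ k + x j * v $ (d+1))^2) = (\<Sum>j<n. ?W (j*(d+1)+k))"
    using design_mat_mult_vec_block[OF k _ v, of _ n x]
    by (simp add: sum.atLeast1_atMost_eq)
  also have "\<dots> = sum ?W ((\<lambda>j. j*(d+1)+k) ` {..<n})"
    by (rule sum.reindex[OF inj, symmetric, unfolded comp_def])
  also have "\<dots> \<le> (\<Sum>r<n*(d+1). ?W r)"
    by (rule sum_mono2) (use block_index_less[OF k] in auto)
  finally show ?thesis .
qed

lemma design_mat_mult_vec_sq_le:
  fixes x :: "nat \<Rightarrow> real"
  assumes n: "n \<ge> 1" and mono: "\<And>i j. 1 \<le> i \<Longrightarrow> i \<le> j \<Longrightarrow> x i \<le> x j"
    and V: "emp_var x n > 0" and v: "v \<in> carrier_vec (d+2)" and r: "r < n*(d+1)"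
  shows "((design_mat d x n *\<^sub>v v) $ r)^2
    \<le> leverage_bound x n * (\<Sum>r'<n*(d+1). ((design_mat d x n *\<^sub>v v) $ r')^2)"
proof -
  define k j a s m where "k = obs_k d r" and "j = obs_j d r"
    and "a = v $ k" and "s = v $ (d+1)" and "m = emp_mean x n"
  define P D where "P = (a + s*m)^2" and "D = (x n - x 1)^2"
  have k: "k < d+1" unfolding k_def using obs_k_le[of d r] by simp
  have j: "1 \<le> j" "j \<le> n" unfolding j_def using obs_j_ge obs_j_le[OF r] by auto
  have nz: "real n > 0" using n by simp
  have "\<bar>x j - m\<bar> \<le> x n - x 1"
    using emp_mean_bounds[of n x, OF n mono] mono[OF order.refl j(1)] mono[OF j] unfolding m_def
    by auto
  then have "\<bar>x j - m\<bar>^2 \<le> (x n - x 1)^2" by (intro power_mono) auto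
  then have Dle: "(x j - m)^2 \<le> D" unfolding D_def by simp
  have "((design_mat d x n *\<^sub>v v) $ r)^2 = ((a + s*m) + s*(x j - m))^2"
    unfolding design_mat_mult_vec_index[OF r v] a_def s_def k_def j_def by (simp add: algebra_simps)
  also have "\<dots> \<le> 2*P + 2* s^2*(x j - m)^2"
    using zero_le_power2[of "(a + s*m) - s*(x j - m)"]
    unfolding P_def by (simp add: power2_eq_square algebra_simps)
  also have "\<dots> \<le> 2*P + 2* s^2*D"
    using Dle by (intro add_left_mono mult_left_mono) auto
  also have "\<dots> \<le> leverage_bound x n * (n * P + s^2 * (n * emp_var x n))"
  proof -
    have "leverage_bound x n * (n * P + s^2 * (n * emp_var x n))
        = 2*P + 2* s^2*D + (2* s^2*emp_var x n + 2*D*P/emp_var x n)"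
      unfolding leverage_bound_def D_def using nz V by (simp add: field_simps)
    moreover have "2* s^2*emp_var x n + 2*D*P/emp_var x n \<ge> 0"
      unfolding P_def D_def using V by auto
    ultimately show ?thesis by linarith
  qed
  also have "\<dots> \<le> leverage_bound x n * (\<Sum>r'<n*(d+1). ((design_mat d x n *\<^sub>v v) $ r')^2)"
  proof (rule mult_left_mono)
    show "n * P + s^2 * (n * emp_var x n) \<le> (\<Sum>r'<n*(d+1). ((design_mat d x n *\<^sub>v v) $ r')^2)"
      using design_block_sum_sq_le[OF k v, of x n] sum_affine_sq_eq_mean_var[OF n]
      unfolding P_def a_def s_def m_def by simp
    show "0 \<le> leverage_bound x n" unfolding leverage_bound_def using nz V by auto
  qed
  finally show ?thesis .
qed

lemma lse_weights_sq_le_leverage_bound: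
  fixes x :: "nat \<Rightarrow> real"
  assumes n: "n \<ge> 2" and mono: "\<And>i j. 1 \<le> i \<Longrightarrow> i \<le> j \<Longrightarrow> x i \<le> x j" and x12: "x 1 \<noteq> x 2"
    and V: "emp_var x n > 0" and t: "t \<in> carrier_vec (d+2)" "t \<noteq> 0\<^sub>v (d+2)" and r: "r < n*(d+1)"
  defines "w \<equiv> lse_weights d x t n"
  shows "(w $ r)^2 / (w \<bullet> w) \<le> leverage_bound x n"
proof -
  have "transpose_mat (gram_inv d x n) *\<^sub>v t \<in> carrier_vec (d+2)"
    using gram_inv_inverse(1)[OF n x12, where d=d] t by simp
  with n have "(w $ r)^2 \<le> leverage_bound x n * (\<Sum>r'<n*(d+1). (w $ r')^2)"
    unfolding w_def lse_weights_def by (intro design_mat_mult_vec_sq_le[OF _ mono V _ r]) auto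
  also have "(\<Sum>r'<n*(d+1). (w $ r')^2) = w \<bullet> w"
    using scalar_prod_self_eq_sum_sq[of w] lse_weights_carrier[OF n x12 t(1)] unfolding w_def by simp
  finally have "(w $ r)^2 \<le> leverage_bound x n * (w \<bullet> w)" .
  then show ?thesis
    using lse_weights_pos[OF n x12 t] unfolding w_def by (simp add: divide_le_eq)
qed

section \<open>Asymptotics of the leverage bound\<close>

lemma leverage_bound_le_powr:
  fixes x :: "nat \<Rightarrow> real"
  assumes n: "n \<ge> 1" and C1: "C1 > 0" and V: "emp_var x n \<ge> C1 * real n powr \<gamma>"
    and x_le: "\<bar>x n\<bar> \<le> C2 * real n powr (\<mu>/2)"
  shows "leverage_bound x n \<le> 2 / real n + (4*C2^2/C1) * real n powr (\<mu> - 1 - \<gamma>)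
    + (4*(x 1)^2/C1) * real n powr (-(1+\<gamma>))"
proof -
  have n: "real n > 0" using n by simp
  have "\<bar>x n\<bar>^2 \<le> (C2 * real n powr (\<mu>/2))^2" using x_le by (intro power_mono) simp_all
  also have "\<dots> = C2^2 * (real n powr (\<mu>/2) * real n powr (\<mu>/2))"
    by (simp add: power2_eq_square)
  also have "real n powr (\<mu>/2) * real n powr (\<mu>/2) = real n powr \<mu>"
    by (simp flip: powr_add)
  finally have "(x n)^2 \<le> C2^2 * real n powr \<mu>" by simp
  moreover have "(x n - x 1)^2 \<le> 2 * (x n)^2 + 2 * (x 1)^2"
    using zero_le_power2[of "x n + x 1"] by (simp add: power2_eq_square algebra_simps)
  ultimately have "(x n - x 1)^2 \<le> 2 * C2^2 * real n powr \<mu> + 2 * (x 1)^2"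
    by linarith
  moreover have "C1 * real n powr (1+\<gamma>) \<le> real n * emp_var x n"
  proof -
    have "C1 * real n powr (1+\<gamma>) = real n * (C1 * real n powr \<gamma>)"
      using powr_mult_base[of "real n" \<gamma>] n by simp
    also have "\<dots> \<le> real n * emp_var x n" using V n by (intro mult_left_mono) auto
    finally show ?thesis .
  qed
  ultimately have "2*(x n - x 1)^2/(n * emp_var x n)
      \<le> 2*(2 * C2^2 * real n powr \<mu> + 2 * (x 1)^2) / (C1 * real n powr (1+\<gamma>))"
    using C1 n by (intro frac_le) auto
  also have "\<dots> = (4*C2^2/C1) * real n powr (\<mu> - 1 - \<gamma>) + (4*(x 1)^2/C1) * real n powr (-(1+\<gamma>))"
  proof -
    have "real n powr (\<mu> - 1 - \<gamma>) = real n powr \<mu> / real n powr (1+\<gamma>)"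
      using powr_diff[of "real n" \<mu> "1+\<gamma>"] by (simp add: algebra_simps)
    moreover have "real n powr (-(1+\<gamma>)) = 1 / real n powr (1+\<gamma>)"
      by (rule powr_minus_divide)
    ultimately show ?thesis using C1 n by (simp add: field_simps)
  qed
  finally show ?thesis unfolding leverage_bound_def by simp
qed

lemma leverage_bound_tendsto_0:
  fixes x :: "nat \<Rightarrow> real"
  assumes var_growth: "(\<lambda>n. emp_var x n) \<in> \<Omega>(\<lambda>n. real n powr \<gamma>)"
    and x_growth: "x \<in> O(\<lambda>n. real n powr (\<mu>/2))"
    and "\<gamma> > -1" and "\<mu> < 1 + \<gamma>"
  shows "eventually (\<lambda>n. emp_var x n > 0) sequentially" and "leverage_bound x \<longlonglongrightarrow> 0"
proof -
  obtain C1 where C1: "C1 > 0"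
    and var_ge: "eventually (\<lambda>n. emp_var x n \<ge> C1 * real n powr \<gamma>) sequentially"
    using var_growth by (elim landau_omega.bigE) (auto simp: emp_var_def abs_of_nonneg sum_nonneg)
  obtain C2 where x_le: "eventually (\<lambda>n. \<bar>x n\<bar> \<le> C2 * real n powr (\<mu>/2)) sequentially"
    using x_growth by (elim landau_o.bigE) auto
  define U where "U n = 2 / real n + (4*C2^2/C1) * real n powr (\<mu> - 1 - \<gamma>)
      + (4*(x 1)^2/C1) * real n powr (-(1+\<gamma>))" for n
  have "(\<lambda>n. real n powr (\<mu> - 1 - \<gamma>)) \<longlonglongrightarrow> 0" "(\<lambda>n. real n powr (-(1+\<gamma>))) \<longlonglongrightarrow> 0"
    using assms(3,4) by (intro tendsto_neg_powr filterlim_real_sequentially; simp)+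
  moreover have "(\<lambda>n. 2 / real n) \<longlonglongrightarrow> 0"
    by (intro tendsto_divide_0[OF tendsto_const] filterlim_at_top_imp_at_infinity
        filterlim_real_sequentially)
  ultimately have "U \<longlonglongrightarrow> 0 + (4*C2^2/C1) * 0 + (4*(x 1)^2/C1) * 0"
    unfolding U_def by (intro tendsto_add tendsto_mult tendsto_const)
  then have U0: "U \<longlonglongrightarrow> 0" by simp
  have var_pos: "eventually (\<lambda>n. emp_var x n > 0) sequentially"
    using var_ge eventually_ge_at_top[of 1]
  proof eventually_elim
    case (elim n)
    have "0 < C1 * real n powr \<gamma>" using C1 elim(2) by simp
    with elim(1) show ?case by linarith
  qed
  then show "eventually (\<lambda>n. emp_var x n > 0) sequentially" .
  have "eventually (\<lambda>n. 0 \<le> leverage_bound x n) sequentially"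
    using var_pos by (rule eventually_mono) (auto simp: leverage_bound_def)
  moreover have "eventually (\<lambda>n. leverage_bound x n \<le> U n) sequentially"
    using var_ge x_le eventually_ge_at_top[of 1]
    by eventually_elim (unfold U_def, rule leverage_bound_le_powr[OF _ C1])
  ultimately show "leverage_bound x \<longlonglongrightarrow> 0"
    by (rule tendsto_sandwich[OF _ _ tendsto_const U0])
qed

section \<open>The standardised contrast\<close>

lemma lse_standardized_eq_weighted_sum:
  fixes x :: "nat \<Rightarrow> real" and gg :: "nat \<Rightarrow> nat \<Rightarrow> real"
  assumes n: "n \<ge> 2" and x12: "x 1 \<noteq> x 2" and \<beta>: "\<beta> \<in> carrier_vec (d+2)"
    and t: "t \<in> carrier_vec (d+2)" and \<sigma>: "\<sigma> \<noteq> 0"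
  defines "w \<equiv> lse_weights d x t n"
  shows "(t \<bullet> (lse d \<beta> x (\<lambda>k j. \<sigma> * gg k j) n - \<beta>)) / (\<sigma> * sqrt (t \<bullet> (gram_inv d x n *\<^sub>v t)))
    = (\<Sum>r<n*(d+1). w $ r / sqrt (w \<bullet> w) * gg (obs_k d r) (obs_j d r))"
  unfolding lse_contrast_eq[OF n x12 t \<beta>] gram_inv_quadratic_form[OF n x12 t] w_def
  using \<sigma> by (simp add: sum_divide_distrib)

lemma lse_weights_normalized_sum_sq:
  fixes x :: "nat \<Rightarrow> real"
  assumes n: "n \<ge> 2" and x12: "x 1 \<noteq> x 2" and t: "t \<in> carrier_vec (d+2)" "t \<noteq> 0\<^sub>v (d+2)"
  defines "w \<equiv> lse_weights d x t n"
  shows "(\<Sum>r<n*(d+1). (w $ r / sqrt (w \<bullet> w))^2) = 1"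
proof -
  have "w \<bullet> w > 0" "dim_vec w = n*(d+1)"
    using lse_weights_pos[OF n x12 t] lse_weights_carrier[OF n x12 t(1)] unfolding w_def by auto
  then show ?thesis
    using scalar_prod_self_eq_sum_sq[of w] by (simp add: power_divide sum_divide_distrib[symmetric])
qed

lemma lse_weights_normalized_small:
  fixes x :: "nat \<Rightarrow> real"
  assumes mono: "\<And>i j. 1 \<le> i \<Longrightarrow> i \<le> j \<Longrightarrow> x i \<le> x j" and x12: "x 1 \<noteq> x 2"
    and var_pos: "eventually (\<lambda>n. emp_var x n > 0) sequentially"
    and lev0: "leverage_bound x \<longlonglongrightarrow> 0"
    and t: "t \<in> carrier_vec (d+2)" "t \<noteq> 0\<^sub>v (d+2)" and "e > 0"
  defines "w \<equiv> lse_weights d x t"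
  shows "eventually (\<lambda>n. \<forall>r<n*(d+1). \<bar>w n $ r / sqrt (w n \<bullet> w n)\<bar> \<le> e) sequentially"
proof -
  have "eventually (\<lambda>n. leverage_bound x n < e^2) sequentially"
    using order_tendstoD(2)[OF lev0] \<open>e > 0\<close> by simp
  then show ?thesis using var_pos eventually_ge_at_top[of 2]
  proof eventually_elim
    case (elim n)
    show ?case
    proof (intro allI impI)
      fix r assume "r < n*(d+1)"
      have "w n \<bullet> w n > 0" unfolding w_def using lse_weights_pos[OF elim(3) x12 t] .
      then have "\<bar>w n $ r / sqrt (w n \<bullet> w n)\<bar>^2 = (w n $ r)^2 / (w n \<bullet> w n)"
        by (simp add: power_divide)
      also have "\<dots> \<le> leverage_bound x n" unfolding w_def
        by (rule lse_weights_sq_le_leverage_bound[OF elim(3) mono x12 elim(2) t \<open>r < n*(d+1)\<close>])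
      also have "\<dots> < e^2" by (rule elim(1))
      finally show "\<bar>w n $ r / sqrt (w n \<bullet> w n)\<bar> \<le> e"
        using power_less_imp_less_base[of _ 2 e] \<open>e > 0\<close> by fastforce
    qed
  qed
qed

lemma (in prob_space) indep_vars_reindex:
  assumes "indep_vars M' X I" "inj_on f J" "f ` J \<subseteq> I"
  shows "indep_vars (\<lambda>j. M' (f j)) (\<lambda>j. X (f j)) J"
proof -
  from assms(1) have rv: "\<forall>i\<in>I. random_variable (M' i) (X i)"
    and ind: "indep_sets (\<lambda>i. {X i -` A \<inter> space M |A. A \<in> sets (M' i)}) I"
    unfolding indep_vars_def2 by auto
  show ?thesis unfolding indep_vars_def2
  proof (intro conjI ballI)
    fix j assume "j \<in> J" then show "random_variable (M' (f j)) (X (f j))" using rv assms(3) by auto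
  next
    show "indep_sets (\<lambda>j. {X (f j) -` A \<inter> space M |A. A \<in> sets (M' (f j))}) J"
    proof (rule indep_setsI)
      fix j assume "j \<in> J"
      then show "{X (f j) -` A \<inter> space M |A. A \<in> sets (M' (f j))} \<subseteq> events"
        using ind assms(3) unfolding indep_sets_def by auto
    next
      fix A K assume K: "K \<noteq> {}" "K \<subseteq> J" "finite K"
        and A: "\<forall>j\<in>K. A j \<in> {X (f j) -` B \<inter> space M |B. B \<in> sets (M' (f j))}"
      have injK: "inj_on f K" using assms(2) K(2) inj_on_subset by blast
      define B where "B i = A (the_inv_into K f i)" for i
      have BA: "B (f j) = A j" if "j \<in> K" for j
        unfolding B_def using the_inv_into_f_f[OF injK that] by simp
      have "prob (\<Inter>i\<in>f`K. B i) = (\<Prod>i\<in>f`K. prob (B i))"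
      proof (rule indep_setsD[OF ind])
        show "f ` K \<subseteq> I" "f ` K \<noteq> {}" "finite (f ` K)" using K assms(3) by auto
        show "\<forall>i\<in>f ` K. B i \<in> {X i -` A \<inter> space M |A. A \<in> sets (M' i)}" using A BA by auto
      qed
      moreover have "(\<Inter>i\<in>f`K. B i) = (\<Inter>j\<in>K. A j)"
        using BA by (simp add: image_image)
      moreover have "(\<Prod>i\<in>f`K. prob (B i)) = (\<Prod>j\<in>K. prob (A j))"
        using prod.reindex[OF injK, of "\<lambda>i. prob (B i)"] BA by simp
      ultimately show "prob (\<Inter>j\<in>K. A j) = (\<Prod>j\<in>K. prob (A j))" by simp
    qed
  qed
qed

lemma (in prob_space) indep_vars_obs_index:
  assumes "indep_vars (\<lambda>_. borel) (\<lambda>(k,j). g k j) ({..d} \<times> {1..})"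
  shows "indep_vars (\<lambda>_. borel) (\<lambda>r. g (obs_k d r) (obs_j d r)) UNIV"
proof -
  have "range (\<lambda>r. (obs_k d r, obs_j d r)) \<subseteq> {..d} \<times> {1..}"
    using obs_k_le obs_j_ge by auto
  then show ?thesis using indep_vars_reindex[OF assms inj_obs_index] by simp
qed

lemma regressor_strict_mono:
  assumes "\<And>j. j \<ge> 1 \<Longrightarrow> eps j > 0" and "\<And>i j. 1 \<le> i \<Longrightarrow> i < j \<Longrightarrow> eps j < eps i"
    and "1 \<le> i" "i < j"
  shows "regressor eps i < regressor eps j"
  using assms(1)[of i] assms(1)[of j] assms(2)[OF assms(3,4)] assms(3,4) by (simp add: regressor_def)

theorem mainTheorem8:
  fixes M :: "'a measure" and d :: nat and \<beta> t :: "real vec"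
    and eps :: "nat \<Rightarrow> real" and \<sigma> \<gamma> \<mu> :: real
    and g :: "nat \<Rightarrow> nat \<Rightarrow> 'a \<Rightarrow> real"
  assumes "prob_space M"
    and "d \<ge> 1"
    and "\<beta> \<in> carrier_vec (d+2)"
    and eps_pos: "\<And>j. j \<ge> 1 \<Longrightarrow> eps j > 0"
    and eps_dec: "\<And>i j. 1 \<le> i \<Longrightarrow> i < j \<Longrightarrow> eps j < eps i"
    and "\<sigma> > 0"
    and meas: "\<And>k j. k \<le> d \<Longrightarrow> j \<ge> 1 \<Longrightarrow> g k j \<in> borel_measurable M"
    and indep: "prob_space.indep_vars M (\<lambda>_. borel) (\<lambda>(k,j). g k j) ({..d} \<times> {1..})"
    and ident: "\<And>k j. k \<le> d \<Longrightarrow> j \<ge> 1 \<Longrightarrow> distr M borel (g k j) = distr M borel (g 0 1)"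
    and "integrable M (\<lambda>\<omega>. (g 0 1 \<omega>)^2)"
    and "prob_space.expectation M (g 0 1) = 0"
    and "prob_space.variance M (g 0 1) = 1"
    and "\<gamma> \<ge> 0" and "\<mu> \<ge> 0" and "max \<mu> (2*\<mu> - \<gamma>) < 1"
    and "(\<lambda>n. emp_var (regressor eps) n) \<in> \<Theta>(\<lambda>n. real n powr \<gamma>)"
    and "regressor eps \<in> O(\<lambda>n. real n powr (\<mu>/2))"
    and "t \<in> carrier_vec (d+2)" and "t \<noteq> 0\<^sub>v (d+2)"
  shows "weak_conv_m
    (\<lambda>n. distr M borel (\<lambda>\<omega>.
       (t \<bullet> (lse d \<beta> (regressor eps) (\<lambda>k j. \<sigma> * g k j \<omega>) n - \<beta>))
       / (\<sigma> * sqrt (t \<bullet> (gram_inv d (regressor eps) n *\<^sub>v t)))))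
    std_normal_distribution"
proof -
  interpret prob_space M by fact
  note t = assms(18,19)
  let ?x = "regressor eps"
  define w where "w n = lse_weights d ?x t n" for n
  define c where "c n r = w n $ r / sqrt (w n \<bullet> w n)" for n r
  define Y where "Y r = g (obs_k d r) (obs_j d r)" for r
  have mono: "?x i \<le> ?x j" if "1 \<le> i" "i \<le> j" for i j
    using regressor_strict_mono[of eps i j, OF eps_pos eps_dec] that by (cases "i = j") auto
  have x12: "?x 1 \<noteq> ?x 2" using regressor_strict_mono[of eps 1 2, OF eps_pos eps_dec] by simp
  have var_pos: "eventually (\<lambda>n. emp_var ?x n > 0) sequentially"
    and lev0: "leverage_bound ?x \<longlonglongrightarrow> 0"
    using leverage_bound_tendsto_0[of ?x \<gamma> \<mu>] assms(13,15-17) by auto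
  have "eventually (\<lambda>n. \<forall>r<n*(d+1). \<bar>c n r\<bar> \<le> e) sequentially" if "e > 0" for e
    using lse_weights_normalized_small[OF mono x12 var_pos lev0 t that] unfolding c_def w_def .
  moreover have "indep_vars (\<lambda>_. borel) Y UNIV"
    unfolding Y_def by (rule indep_vars_obs_index[OF indep])
  moreover have "Y 0 = g 0 1" "\<And>r. distr M borel (Y r) = distr M borel (g 0 1)"
    unfolding Y_def using ident[OF obs_k_le obs_j_ge] by (auto simp: obs_k_def obs_j_def)
  ultimately have "weak_conv_m (\<lambda>n. distr M borel (\<lambda>\<omega>. \<Sum>r<n*(d+1). c n r * Y r \<omega>)) std_normal_distribution"
    using lse_weights_normalized_sum_sq[OF _ x12 t] assms(10-12)
    by (intro weighted_clt) (auto simp: c_def w_def eventually_at_top_linorder)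
  then show ?thesis
    using lse_standardized_eq_weighted_sum[OF _ x12 assms(3) t(1)] \<open>\<sigma> > 0\<close>
    by (elim weak_conv_m_eventually_cong)
      (auto simp: c_def w_def Y_def eventually_at_top_linorder intro!: exI[of _ 2])
qed

end
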